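(* Let $K$ be a circle of radius $1$ and centre $O$, and let $P$ be a point with $d=\mathrm{dist}(P,K)$ satisfying $0<d<1/2$. Let $Q\in K$ be such that the triangle $POQ$ is positively (counter-clockwise) oriented. (i) If $P$ is in the interior of $K$ and $|PQ|\ge 2\sqrt d$, then there is an angle $0<\alpha<\pi/2$ with $\sin\alpha<2\sqrt d$ such that the circle $K'$ obtained by rotating $K$ about $Q$ in the positive direction by angle $\alpha$ contains $P$. (ii) If $P$ is in the exterior of $K$ and $3\sqrt d\le |PQ|\le 2-d$, then there is an angle $0<\alpha<\pi/2$ with $\sin\alpha<2\sqrt d$ such that the circle $K'$ obtained by rotating $K$ about $Q$ in the negative direction by angle $\alpha$ contains $P$. Moreover, in both cases the distance between $O$ and the centre of $K'$ is less than $4\sqrt d$.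
   Context: $|AB|$ denotes the Euclidean distance between points $A,B$. The positive direction of rotation is counter-clockwise. *)

theory Defs
  imports "HOL-Analysis.Analysis"
begin

definition rot :: "complex \<Rightarrow> real \<Rightarrow> complex \<Rightarrow> complex" where
  "rot c t z = c + cis t * (z - c)"

text \<open>Triangle A B C is positively (counter-clockwise) oriented: positive signed area.\<close>
definition pos_oriented :: "complex \<Rightarrow> complex \<Rightarrow> complex \<Rightarrow> bool" where
  "pos_oriented A B C \<longleftrightarrow> Im (cnj (B - A) * (C - A)) > 0"

end

theory Submission
  imports Defs
begin

text \<open>Put w = P - Q and v = O - Q, a unit vector. P lies on the image of K under the rotation
  about Q by t iff |w - cis t * v| = 1, and the defect |w - cis t * v|^2 - 1 equals |PO|^2 - 1 at
  t = 0, so it is negative for P inside and positive for P outside K. The angle is found by the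
  intermediate value theorem on [0, t0] with t0 = 2 arctan (sqrt d), for which
  sin t0 = 2 sqrt d / (1 + d) and |1 - cis t0| < 2 sqrt d give the required bounds. That the defect
  has changed sign at t0 (resp. -t0) is a polynomial inequality in |PQ|^2; after squaring it says
  that a concave quadratic in |PQ|^2 is nonnegative, which need only be checked at the two ends of
  the admissible range of |PQ|^2.\<close>

lemma pos_oriented_cycle: "pos_oriented A B C \<longleftrightarrow> pos_oriented C A B"
  unfolding pos_oriented_def by (simp add: algebra_simps)

lemma dist_rot_self: "dist z (rot c t z) = cmod (1 - cis t) * dist z c"
proof -
  have "z - rot c t z = (1 - cis t) * (z - c)" by (simp add: rot_def algebra_simps)
  then show ?thesis by (simp add: dist_norm norm_mult)
qed

lemma cmod_1_minus_cis_power2: "cmod (1 - cis t)^2 = 2 - 2 * cos t"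
  using sin_cos_squared_add[of t] by (simp only: cmod_power2) (simp add: power2_eq_square algebra_simps)

lemma cmod_1_minus_cis_minus: "cmod (1 - cis (-t)) = cmod (1 - cis t)"
  by (metis cis_cnj complex_cnj_diff complex_cnj_one complex_mod_cnj)

lemma in_rot_image_sphere_iff:
  "P \<in> rot Q t ` sphere c r \<longleftrightarrow> cmod ((P - Q) - cis t * (c - Q)) = r"
proof
  assume "P \<in> rot Q t ` sphere c r"
  then obtain k where k: "dist c k = r" and P: "P = rot Q t k" by auto
  have "(P - Q) - cis t * (c - Q) = cis t * (k - c)" by (simp add: P rot_def algebra_simps)
  then show "cmod ((P - Q) - cis t * (c - Q)) = r"
    using k by (simp add: norm_mult dist_norm norm_minus_commute)
next
  assume r: "cmod ((P - Q) - cis t * (c - Q)) = r"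
  define k where "k = Q + cis (-t) * (P - Q)"
  have "rot Q t k = Q + (cis t * cis (-t)) * (P - Q)" by (simp add: rot_def k_def algebra_simps)
  then have "P = rot Q t k" by (simp add: cis_mult)
  moreover have "k - c = cis (-t) * ((P - Q) - cis t * (c - Q))"
    by (simp add: k_def algebra_simps mult.assoc[symmetric] cis_mult)
  then have "k \<in> sphere c r" using r by (simp add: norm_mult dist_norm norm_minus_commute[of c k])
  ultimately show "P \<in> rot Q t ` sphere c r" by blast
qed

lemma infdist_sphere:
  fixes P c :: complex
  assumes "0 < r"
  shows "infdist P (sphere c r) = \<bar>dist P c - r\<bar>"
proof (rule antisym)
  have "c + of_real r \<in> sphere c r" using assms by (simp add: dist_norm)
  then have ne: "sphere c r \<noteq> {}" by blast
  show "\<bar>dist P c - r\<bar> \<le> infdist P (sphere c r)"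
    unfolding infdist_notempty[OF ne]
  proof (rule cINF_greatest)
    fix k assume "k \<in> sphere c r"
    then show "\<bar>dist P c - r\<bar> \<le> dist P k"
      using dist_triangle[of P c k] dist_triangle[of c k P] by (simp add: dist_commute)
  qed (fact ne)
  obtain u where u: "cmod u = 1" "P - c = of_real (dist P c) * u"
  proof (cases "P = c")
    case True
    then show ?thesis using that[of 1] by simp
  next
    case False
    then show ?thesis using that[of "(P - c) / of_real (dist P c)"] by (simp add: dist_norm norm_divide)
  qed
  have k: "c + of_real r * u \<in> sphere c r" using u(1) assms by (simp add: dist_norm norm_mult)
  have "P - (c + of_real r * u) = of_real (dist P c - r) * u" using u(2) by (simp add: algebra_simps)
  then have "dist P (c + of_real r * u) = \<bar>dist P c - r\<bar>"
    by (simp only: dist_norm norm_mult norm_of_real u(1)) simp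
  then show "infdist P (sphere c r) \<le> \<bar>dist P c - r\<bar>" using infdist_le[OF k, of P] by simp
qed

lemma cmod_diff_cis_mult_power2:
  "cmod (w - cis t * v)^2 = cmod w^2 + cmod v^2 - 2 * (Re (cnj w * v) * cos t - Im (cnj w * v) * sin t)"
proof -
  have "cmod (w - cis t * v)^2 = cmod w^2 + cmod (cis t * v)^2 - 2 * Re (cnj w * (cis t * v))"
    by (simp only: cmod_power2) (simp add: power2_eq_square algebra_simps)
  then show ?thesis by (simp add: norm_mult algebra_simps)
qed

lemma cnj_mult_unit_coordinates:
  assumes "cmod v = 1"
  shows "Re (cnj w * v)^2 + Im (cnj w * v)^2 = cmod w^2"
    and "cmod (w - v)^2 = cmod w^2 + 1 - 2 * Re (cnj w * v)"
proof -
  have "cmod (cnj w * v) = cmod w" using assms by (simp add: norm_mult)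
  then show "Re (cnj w * v)^2 + Im (cnj w * v)^2 = cmod w^2" by (metis cmod_power2)
  show "cmod (w - v)^2 = cmod w^2 + 1 - 2 * Re (cnj w * v)"
    using assms cmod_diff_cis_mult_power2[of w 0 v] by simp
qed

lemma sin_double_arctan: "sin (2 * arctan q) = 2 * q / (1 + q^2)"
proof -
  have "sqrt (1 + q^2)^2 = 1 + q^2" "0 < sqrt (1 + q^2)" by (simp_all add: add_pos_nonneg)
  then show ?thesis unfolding sin_double sin_arctan cos_arctan by (simp add: field_simps power2_eq_square)
qed

lemma cos_double_arctan: "cos (2 * arctan q) = (1 - q^2) / (1 + q^2)"
proof -
  have "sqrt (1 + q^2)^2 = 1 + q^2" "0 < sqrt (1 + q^2)" by (simp_all add: add_pos_nonneg)
  then show ?thesis unfolding cos_double sin_arctan cos_arctan by (simp add: field_simps power_divide)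
qed

lemma cmod_diff_cis_double_arctan:
  assumes "cmod v = 1"
  shows "(1 + q^2) * (cmod (w - cis (2 * arctan q) * v)^2 - 1)
           = (1 + q^2) * cmod w^2 - 2 * ((1 - q^2) * Re (cnj w * v) - 2 * q * Im (cnj w * v))"
proof -
  let ?t = "2 * arctan q"
  have "1 + q^2 \<noteq> 0" using zero_le_power2[of q] by linarith
  then have c: "(1 + q^2) * cos ?t = 1 - q^2" and s: "(1 + q^2) * sin ?t = 2 * q"
    by (simp_all add: cos_double_arctan sin_double_arctan)
  have "(1 + q^2) * (cmod (w - cis ?t * v)^2 - 1)
          = (1 + q^2) * cmod w^2
              - 2 * (Re (cnj w * v) * ((1 + q^2) * cos ?t) - Im (cnj w * v) * ((1 + q^2) * sin ?t))"
    unfolding cmod_diff_cis_mult_power2 assms by (simp add: algebra_simps)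
  then show ?thesis unfolding c s by (simp add: algebra_simps)
qed

lemma double_arctan_sqrt_bounds:
  assumes "0 < d" "d < 1" "0 \<le> a" "a \<le> 2 * arctan (sqrt d)"
  shows "a < pi/2" "sin a < 2 * sqrt d" "cmod (1 - cis a) < 2 * sqrt d"
proof -
  let ?a0 = "2 * arctan (sqrt d)"
  have "sqrt d < 1" using assms(2) by simp
  then have "arctan (sqrt d) < pi/4" by (rule arctan_less_pi4_pos)
  then have a0: "?a0 < pi/2" by simp
  then show "a < pi/2" using assms(4) by simp
  have "sin a \<le> sin ?a0" using assms(3,4) a0 by (intro sin_monotone_2pi_le) auto
  also have "\<dots> = 2 * sqrt d / (1 + d)" using assms(1) by (simp add: sin_double_arctan)
  also have "\<dots> < 2 * sqrt d" using assms(1) by (simp add: field_simps)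
  finally show "sin a < 2 * sqrt d" .
  have "cos ?a0 \<le> cos a" using assms(3,4) a0 by (intro cos_monotone_0_pi_le) auto
  moreover have "cos ?a0 = (1 - d) / (1 + d)" using assms(1) by (simp add: cos_double_arctan)
  ultimately have "cmod (1 - cis a)^2 \<le> 2 - 2 * ((1 - d) / (1 + d))"
    unfolding cmod_1_minus_cis_power2 by linarith
  also have "\<dots> = 4 * d / (1 + d)" using assms(1) by (simp add: field_simps)
  also have "\<dots> < (2 * sqrt d)^2" using assms(1) by (simp add: field_simps power_mult_distrib)
  finally show "cmod (1 - cis a) < 2 * sqrt d" by (rule power2_less_imp_less) (use assms(1) in simp)
qed

lemma IVT_sign_change:
  fixes f :: "real \<Rightarrow> real"
  assumes "a \<le> b" "continuous_on {a..b} f" "f a \<noteq> 0" "f a * f b \<le> 0"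
  shows "\<exists>x. a < x \<and> x \<le> b \<and> f x = 0"
proof -
  have "\<exists>x. a \<le> x \<and> x \<le> b \<and> f x = 0"
  proof (cases "f a < 0")
    case True
    then have "0 \<le> f b" using assms(4) by (simp add: mult_le_0_iff)
    with True show ?thesis using IVT'[of f a 0 b] assms(1,2) by simp
  next
    case False
    then have "f b \<le> 0" using assms(3,4) by (simp add: mult_le_0_iff)
    with False show ?thesis using IVT2'[of f b 0 a] assms(1,2) by simp
  qed
  then show ?thesis using assms(3) by (metis order_le_less)
qed

lemma rotation_through_point_exists:
  fixes P Q c :: complex
  assumes "0 \<le> b" "0 \<le> r" "dist P c \<noteq> r"
    and "(dist P c^2 - r^2) * (cmod ((P - Q) - cis (s * b) * (c - Q))^2 - r^2) \<le> 0"
  shows "\<exists>a. 0 < a \<and> a \<le> b \<and> P \<in> rot Q (s * a) ` sphere c r"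
proof -
  define f where "f a = cmod ((P - Q) - cis (s * a) * (c - Q))^2 - r^2" for a
  have "f 0 = dist P c^2 - r^2" by (simp add: f_def dist_norm)
  moreover have "dist P c^2 \<noteq> r^2" using assms(2,3) by (simp add: power2_eq_iff_nonneg)
  moreover have "continuous_on {0..b} f" unfolding f_def by (intro continuous_intros)
  ultimately obtain a where a: "0 < a" "a \<le> b" "f a = 0"
    using IVT_sign_change[of 0 b f] assms(1,4) by (auto simp: f_def)
  then have "cmod ((P - Q) - cis (s * a) * (c - Q)) = r"
    using assms(2) by (simp add: f_def power2_eq_iff_nonneg)
  with a show ?thesis by (auto simp: in_rot_image_sphere_iff)
qed

lemma concave_quadratic_nonneg_between:
  fixes f :: "real \<Rightarrow> real"
  assumes f: "\<And>v. f v = A * v^2 + B * v + C"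
    and "A \<le> 0" "0 \<le> f a" "0 \<le> f b" "a \<le> v" "v \<le> b"
  shows "0 \<le> f v"
proof (cases "a = b")
  case True
  then show ?thesis using assms(3,5,6) by simp
next
  case False
  then have ab: "0 < b - a" using assms(5,6) by simp
  have "(b - a) * f v = (b - v) * f a + (v - a) * f b - A * (b - a) * (v - a) * (b - v)"
    unfolding f by (simp add: power2_eq_square algebra_simps)
  also have "0 \<le> \<dots>"
  proof -
    have "0 \<le> (b - v) * f a" "0 \<le> (v - a) * f b" using assms(3-6) by simp_all
    moreover have "A * (b - a) * (v - a) * (b - v) \<le> 0"
      using assms(2,5,6) ab by (intro mult_nonpos_nonneg) auto
    ultimately show ?thesis by linarith
  qed
  finally show ?thesis using ab by (simp add: zero_le_mult_iff)
qed

lemma interior_rotation_inequality: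
  fixes d u x y :: real
  assumes d0: "0 < d" and d1: "d < 1/2" and u: "4 * d \<le> u"
    and x: "x = u/2 + (d - d^2/2)" and xy: "x^2 + y^2 = u" and y0: "0 < y"
  shows "2 * (x * (1 - d) - y * (2 * sqrt d)) \<le> u * (1 + d)"
proof -
  define b where "b = (1 - d/2) * (1 - d)"
  define e where "e = d - d^2/2"
  have gap: "u * (1 + d) - 2 * (x * (1 - d) - y * (2 * sqrt d)) = 2 * d * (u - b) + 4 * y * sqrt d"
    by (simp add: x b_def field_simps power2_eq_square)
  show ?thesis
  proof (cases "b \<le> u")
    case True
    then show ?thesis using gap d0 y0 by (smt (verit) mult_nonneg_nonneg real_sqrt_ge_zero)
  next
    case False
    define g where "g v = 4 * d * (v - (v/2 + e)^2) - d^2 * (b - v)^2" for v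
    have "d^2 < d/2" using d0 d1 by (simp add: power2_eq_square)
    moreover have "b = 1 - 3/2*d + d^2/2" by (simp add: b_def field_simps power2_eq_square)
    ultimately have "d < 1/5" using False u by linarith
    have "g (4 * d) = d^2 * (15 - 25*d - 77/4*d^2 + 9/2*d^3 - 1/4*d^4)"
      by (simp add: g_def e_def b_def field_simps power2_eq_square power3_eq_cube power4_eq_xxxx)
    moreover have "0 \<le> 15 - 25*d - 77/4*d^2 + 9/2*d^3 - 1/4*d^4"
    proof -
      have "d^2 \<le> d/5" "d^4 \<le> d^3" "0 \<le> d^3"
        using d0 \<open>d < 1/5\<close> by (simp_all add: power2_eq_square power4_eq_xxxx power3_eq_cube mult_left_le)
      then show ?thesis using \<open>d < 1/5\<close> by linarith
    qed
    ultimately have g1: "0 \<le> g (4 * d)" by simp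
    have "g b = d * (1 - d/2) * (3 - 11/2*d + d^3/2)"
      by (simp add: g_def e_def b_def field_simps power2_eq_square power3_eq_cube)
    moreover have "0 \<le> 3 - 11/2*d + d^3/2" using d0 d1 by (simp add: power3_eq_cube)
    ultimately have g2: "0 \<le> g b" using d0 d1 by simp
    have "g v = - d * (1 + d) * v^2 + (4*d - 4*d*e + 2*d^2*b) * v + (- 4*d*e^2 - d^2*b^2)" for v
      by (simp add: g_def power2_eq_square algebra_simps)
    then have "0 \<le> g u"
      by (rule concave_quadratic_nonneg_between[where a = "4 * d" and b = b])
        (use g1 g2 u False d0 in simp_all)
    moreover have "y^2 = u - (u/2 + e)^2" using xy by (simp add: x e_def)
    then have "(2 * y * sqrt d)^2 = 4 * d * (u - (u/2 + e)^2)" using d0 by (simp add: power_mult_distrib)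
    ultimately have "(d * (b - u))^2 \<le> (2 * y * sqrt d)^2" by (simp add: g_def power_mult_distrib)
    then have "d * (b - u) \<le> 2 * y * sqrt d"
      by (rule power2_le_imp_le) (use y0 d0 in simp)
    then show ?thesis using gap by (simp add: algebra_simps)
  qed
qed

lemma exterior_rotation_inequality:
  fixes d u x y :: real
  assumes d0: "0 < d" and d1: "d < 1/2" and u: "9 * d \<le> u" "u \<le> (2 - d)^2"
    and x: "x = u/2 - (d + d^2/2)" and xy: "x^2 + y^2 = u" and y0: "0 < y"
  shows "u * (1 + d) \<le> 2 * (x * (1 - d) + y * (2 * sqrt d))"
proof -
  define b where "b = (2 - d)^2"
  define e where "e = d + d^2/2"
  define g where "g v = 4 * d * (v - (v/2 - e)^2) - (v * d + e * (1 - d))^2" for v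
  have "d \<le> 1/3"
  proof (rule ccontr)
    assume "\<not> d \<le> 1/3"
    then have "(2 - d)^2 < (5/3)^2" using d1 by (intro power_strict_mono) auto
    then show False using u \<open>\<not> d \<le> 1/3\<close> by (simp add: power2_eq_square)
  qed
  then have dd: "d^2 \<le> d/3" using d0 by (simp add: power2_eq_square)
  have "g (9 * d) = d^2 * (36 - 4*d*(7/2 - d/2)^2 - (1 + 17/2*d - d^2/2)^2)"
    by (simp add: g_def e_def field_simps power2_eq_square)
  moreover have "0 \<le> 36 - 4*d*(7/2 - d/2)^2 - (1 + 17/2*d - d^2/2)^2"
  proof -
    have "(7/2 - d/2)^2 \<le> 49/4" using d0 \<open>d \<le> 1/3\<close> by (simp add: power2_eq_square field_simps)
    then have "4*d*(7/2 - d/2)^2 \<le> 49*d" using mult_left_mono[of _ _ "4*d"] d0 by fastforce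
    moreover have "(1 + 17/2*d - d^2/2)^2 \<le> (1 + 17/2*d)^2" using d0 dd by (intro power_mono) auto
    moreover have "(1 + 17/2*d)^2 = 1 + 17*d + 289/4*d^2" by (simp add: power2_eq_square algebra_simps)
    ultimately show ?thesis using dd \<open>d \<le> 1/3\<close> d0 by linarith
  qed
  ultimately have g1: "0 \<le> g (9 * d)" by simp
  have "g b = d^2 * ((32 - 32*d) - (5 - 9/2*d + d^2/2)^2)"
    by (simp add: g_def e_def b_def field_simps power2_eq_square)
  moreover have "(5 - 9/2*d + d^2/2)^2 \<le> 32 - 32*d"
  proof -
    have "(5 - 9/2*d + d^2/2)^2 \<le> (5 - 4*d)^2" using d0 \<open>d \<le> 1/3\<close> dd by (intro power_mono) auto
    moreover have "(5 - 4*d)^2 = 25 - 40*d + 16*d^2" by (simp add: power2_eq_square algebra_simps)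
    ultimately show ?thesis using dd \<open>d \<le> 1/3\<close> d0 by linarith
  qed
  ultimately have g2: "0 \<le> g b" by simp
  have "g v = - d * (1 + d) * v^2 + (4*d + 4*d*e - 2*d*e*(1 - d)) * v
               + (- 4*d*e^2 - e^2*(1 - d)^2)" for v
    by (simp add: g_def power2_eq_square algebra_simps)
  then have "0 \<le> g u"
    by (rule concave_quadratic_nonneg_between[where a = "9 * d" and b = b])
      (use g1 g2 u d0 in \<open>simp_all add: b_def\<close>)
  moreover have "y^2 = u - (u/2 - e)^2" using xy by (simp add: x e_def)
  then have "(2 * y * sqrt d)^2 = 4 * d * (u - (u/2 - e)^2)" using d0 by (simp add: power_mult_distrib)
  ultimately have "(u * d + e * (1 - d))^2 \<le> (2 * y * sqrt d)^2" by (simp add: g_def)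
  then have "u * d + e * (1 - d) \<le> 2 * y * sqrt d"
    by (rule power2_le_imp_le) (use y0 d0 in simp)
  moreover have "2 * (x * (1 - d) + y * (2 * sqrt d)) - u * (1 + d)
                   = 2 * (2 * y * sqrt d) - 2 * (u * d + e * (1 - d))"
    by (simp add: x e_def field_simps power2_eq_square)
  ultimately show ?thesis by (smt (verit))
qed

lemma rotation_through_interior_point:
  fixes P Q c :: complex and d :: real
  assumes Q: "cmod (c - Q) = 1" and P: "dist P c = 1 - d" and d: "0 < d" "d < 1/2"
    and orient: "0 < Im (cnj (P - Q) * (c - Q))" and far: "2 * sqrt d \<le> cmod (P - Q)"
  shows "\<exists>a. 0 < a \<and> a \<le> 2 * arctan (sqrt d) \<and> P \<in> rot Q a ` sphere c 1"
proof -
  define w v where "w = P - Q" and "v = c - Q"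
  define x y u where "x = Re (cnj w * v)" and "y = Im (cnj w * v)" and "u = cmod w^2"
  have v1: "cmod v = 1" using Q by (simp add: v_def)
  have xy: "x^2 + y^2 = u" and "(1 - d)^2 = u + 1 - 2 * x"
    using cnj_mult_unit_coordinates[OF v1, of w] P by (simp_all add: x_def y_def u_def w_def v_def dist_norm)
  then have x: "x = u/2 + (d - d^2/2)" by (simp add: power2_eq_square field_simps)
  have "(2 * sqrt d)^2 \<le> u" unfolding u_def w_def using far d by (intro power_mono) auto
  then have u: "4 * d \<le> u" using d by (simp add: power_mult_distrib)
  have "(1 + d) * (cmod (w - cis (2 * arctan (sqrt d)) * v)^2 - 1)
          = u * (1 + d) - 2 * (x * (1 - d) - y * (2 * sqrt d))"
    using cmod_diff_cis_double_arctan[OF v1, of "sqrt d" w] d by (simp add: x_def y_def u_def algebra_simps)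
  also have "0 \<le> \<dots>"
    using interior_rotation_inequality[OF d u x xy] orient by (simp add: y_def w_def v_def)
  finally have "0 \<le> cmod (w - cis (1 * (2 * arctan (sqrt d))) * v)^2 - 1^2"
    using d by (simp add: zero_le_mult_iff)
  moreover have "(1 - d)^2 < 1^2" using d by (intro power_strict_mono) auto
  then have "dist P c^2 - 1^2 < 0" using P by simp
  ultimately show ?thesis
    using rotation_through_point_exists[where b = "2 * arctan (sqrt d)" and r = 1 and s = 1] P d
    unfolding w_def v_def by (simp add: mult_nonpos_nonneg)
qed

lemma rotation_through_exterior_point:
  fixes P Q c :: complex and d :: real
  assumes Q: "cmod (c - Q) = 1" and P: "dist P c = 1 + d" and d: "0 < d" "d < 1/2"
    and orient: "0 < Im (cnj (P - Q) * (c - Q))"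
    and far: "3 * sqrt d \<le> cmod (P - Q)" and near: "cmod (P - Q) \<le> 2 - d"
  shows "\<exists>a. 0 < a \<and> a \<le> 2 * arctan (sqrt d) \<and> P \<in> rot Q (-a) ` sphere c 1"
proof -
  define w v where "w = P - Q" and "v = c - Q"
  define x y u where "x = Re (cnj w * v)" and "y = Im (cnj w * v)" and "u = cmod w^2"
  have v1: "cmod v = 1" using Q by (simp add: v_def)
  have xy: "x^2 + y^2 = u" and "(1 + d)^2 = u + 1 - 2 * x"
    using cnj_mult_unit_coordinates[OF v1, of w] P by (simp_all add: x_def y_def u_def w_def v_def dist_norm)
  then have x: "x = u/2 - (d + d^2/2)" by (simp add: power2_eq_square field_simps)
  have "(3 * sqrt d)^2 \<le> u" unfolding u_def w_def using far d by (intro power_mono) auto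
  then have u1: "9 * d \<le> u" using d by (simp add: power_mult_distrib)
  have u2: "u \<le> (2 - d)^2" unfolding u_def w_def using near by (intro power_mono) auto
  have "2 * arctan (- sqrt d) = -1 * (2 * arctan (sqrt d))" by (simp add: arctan_minus)
  then have "(1 + d) * (cmod (w - cis (-1 * (2 * arctan (sqrt d))) * v)^2 - 1)
               = u * (1 + d) - 2 * (x * (1 - d) + y * (2 * sqrt d))"
    using cmod_diff_cis_double_arctan[OF v1, of "- sqrt d" w] d by (simp add: x_def y_def u_def algebra_simps)
  also have "\<dots> \<le> 0"
    using exterior_rotation_inequality[OF d u1 u2 x xy] orient by (simp add: y_def w_def v_def)
  finally have "cmod (w - cis (-1 * (2 * arctan (sqrt d))) * v)^2 - 1^2 \<le> 0"
    using d by (simp add: mult_le_0_iff)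
  moreover have "1^2 < (1 + d)^2" using d by (intro power_strict_mono) auto
  then have "0 < dist P c^2 - 1^2" using P by simp
  ultimately have "\<exists>a. 0 < a \<and> a \<le> 2 * arctan (sqrt d) \<and> P \<in> rot Q (-1 * a) ` sphere c 1"
    using rotation_through_point_exists[where b = "2 * arctan (sqrt d)" and r = 1 and s = "-1"] P d
    unfolding w_def v_def by (simp add: mult_nonneg_nonpos)
  then show ?thesis by simp
qed

theorem lemma1:
  fixes Oc P Q :: complex and d :: real
  defines "K \<equiv> sphere Oc 1"
  assumes d_def: "d = infdist P K"
    and d_pos: "0 < d" and d_small: "d < 1/2"
    and QK: "Q \<in> K"
    and orient: "pos_oriented P Oc Q"
  shows "(P \<in> ball Oc 1 \<and> cmod (P - Q) \<ge> 2 * sqrt d \<longrightarrow>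
            (\<exists>\<alpha>. 0 < \<alpha> \<and> \<alpha> < pi/2 \<and> sin \<alpha> < 2 * sqrt d \<and>
                 P \<in> rot Q \<alpha> ` K \<and> dist Oc (rot Q \<alpha> Oc) < 4 * sqrt d))
       \<and> (P \<notin> cball Oc 1 \<and> 3 * sqrt d \<le> cmod (P - Q) \<and> cmod (P - Q) \<le> 2 - d \<longrightarrow>
            (\<exists>\<alpha>. 0 < \<alpha> \<and> \<alpha> < pi/2 \<and> sin \<alpha> < 2 * sqrt d \<and>
                 P \<in> rot Q (-\<alpha>) ` K \<and> dist Oc (rot Q (-\<alpha>) Oc) < 4 * sqrt d))"
proof -
  have Q: "cmod (Oc - Q) = 1" using QK by (simp add: K_def dist_norm norm_minus_commute)
  have d_eq: "d = \<bar>dist P Oc - 1\<bar>" using d_def by (simp add: K_def infdist_sphere)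
  have y: "0 < Im (cnj (P - Q) * (Oc - Q))"
    using orient pos_oriented_cycle[of P Oc Q] by (simp add: pos_oriented_def)
  have small: "a < pi/2 \<and> sin a < 2 * sqrt d \<and> dist Oc (rot Q a Oc) < 4 * sqrt d
                 \<and> dist Oc (rot Q (-a) Oc) < 4 * sqrt d"
    if "0 < a" "a \<le> 2 * arctan (sqrt d)" for a
    using double_arctan_sqrt_bounds[of d a] that d_pos d_small QK
    by (simp add: K_def dist_rot_self cmod_1_minus_cis_minus) (use real_sqrt_gt_zero[OF d_pos] in linarith)
  show ?thesis
  proof (intro conjI impI)
    assume "P \<in> ball Oc 1 \<and> 2 * sqrt d \<le> cmod (P - Q)"
    moreover from this have "dist P Oc = 1 - d" using d_eq by (simp add: dist_commute)
    ultimately obtain a where "0 < a" "a \<le> 2 * arctan (sqrt d)" "P \<in> rot Q a ` K"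
      using rotation_through_interior_point[OF Q _ d_pos d_small y] by (auto simp: K_def)
    with small show "\<exists>\<alpha>. 0 < \<alpha> \<and> \<alpha> < pi/2 \<and> sin \<alpha> < 2 * sqrt d \<and>
                 P \<in> rot Q \<alpha> ` K \<and> dist Oc (rot Q \<alpha> Oc) < 4 * sqrt d" by blast
  next
    assume "P \<notin> cball Oc 1 \<and> 3 * sqrt d \<le> cmod (P - Q) \<and> cmod (P - Q) \<le> 2 - d"
    moreover from this have "dist P Oc = 1 + d" using d_eq by (simp add: dist_commute)
    ultimately obtain a where "0 < a" "a \<le> 2 * arctan (sqrt d)" "P \<in> rot Q (-a) ` K"
      using rotation_through_exterior_point[OF Q _ d_pos d_small y] by (auto simp: K_def)
    with small show "\<exists>\<alpha>. 0 < \<alpha> \<and> \<alpha> < pi/2 \<and> sin \<alpha> < 2 * sqrt d \<and>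
                 P \<in> rot Q (-\<alpha>) ` K \<and> dist Oc (rot Q (-\<alpha>) Oc) < 4 * sqrt d" by blast
  qed
qed

end
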